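(* Let $A\in\mathbb{R}^{m\times n}$, $b\in\mathbb{R}^m$ and $\delta\ge 0$, and assume the set $\mathcal{F}=\{x\in\mathbb{R}^n:\|Ax-b\|\le\delta\}$ is nonempty. Consider the zero-norm problem $$\text{(P)}\qquad \min_{x\in\mathbb{R}^n}\{\|x\|_0:\ \|Ax-b\|\le\delta\}$$ and the problem $$\text{(MPEC)}\qquad \min_{x,v\in\mathbb{R}^n}\{\langle e,e-v\rangle:\ \|Ax-b\|\le\delta,\ \langle v,|x|\rangle=0,\ 0\le v\le e\}.$$ Then: (a) every locally optimal solution of (MPEC) has the form $(x^*,e-\operatorname{sign}(|x^*|))$ for some $x^*\in\mathbb{R}^n$; (b) $x^*$ is a locally optimal solution of (P) if and only if $(x^*,e-\operatorname{sign}(|x^*|))$ is a locally optimal solution of (MPEC).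
   Context: $\|\cdot\|$ is the Euclidean norm, $\|x\|_0$ is the number of nonzero components of $x$, $e\in\mathbb{R}^n$ is the vector of all ones, $|x|$ is the componentwise absolute value, $\operatorname{sign}$ is applied componentwise (so $\operatorname{sign}(|x|)_i=1$ if $x_i\neq0$ and $0$ otherwise), and inequalities between vectors are componentwise. *)

theory Defs
  imports "HOL-Analysis.Analysis"
begin

definition l0norm :: "real^'n \<Rightarrow> nat" where
  "l0norm x = card {i. x $ i \<noteq> 0}"

definition vabs :: "real^'n \<Rightarrow> real^'n" where
  "vabs x = (\<chi> i. \<bar>x $ i\<bar>)"

definition vsign :: "real^'n \<Rightarrow> real^'n" where
  "vsign x = (\<chi> i. sgn (x $ i))"

definition ones :: "real^'n" where
  "ones = (\<chi> i. 1)"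

definition loc_min :: "('a::metric_space \<Rightarrow> real) \<Rightarrow> 'a set \<Rightarrow> 'a \<Rightarrow> bool" where
  "loc_min f S z \<longleftrightarrow> z \<in> S \<and> (\<exists>\<epsilon>>0. \<forall>y\<in>S. dist y z < \<epsilon> \<longrightarrow> f z \<le> f y)"

definition feasP :: "real^'n^'m \<Rightarrow> real^'m \<Rightarrow> real \<Rightarrow> (real^'n) set" where
  "feasP A b \<delta> = {x. norm (A *v x - b) \<le> \<delta>}"

definition objMPEC :: "(real^'n) \<times> (real^'n) \<Rightarrow> real" where
  "objMPEC z = ones \<bullet> (ones - snd z)"

definition feasMPEC :: "real^'n^'m \<Rightarrow> real^'m \<Rightarrow> real \<Rightarrow> ((real^'n) \<times> (real^'n)) set" where
  "feasMPEC A b \<delta> = {(x, v). norm (A *v x - b) \<le> \<delta> \<and> v \<bullet> vabs x = 0 \<and>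
      (\<forall>i. 0 \<le> v $ i \<and> v $ i \<le> 1)}"

end

theory Submission
  imports Defs
begin

text \<open>The support of a vector can only grow under small perturbations, so the zero-norm is
  locally minimal at every feasible point of (P), whatever the constraint set.  Likewise, near
  \<open>(x, e - sign |x|)\<close> complementarity forces \<open>v\<^sub>i = 0\<close> on the support of \<open>x\<close>, which makes this
  pair locally optimal for (MPEC).  Conversely, at a local minimizer \<open>(x, v)\<close> of (MPEC) a
  component \<open>v\<^sub>i < 1\<close> with \<open>x\<^sub>i = 0\<close> could be increased, strictly decreasing the objective; hence
  \<open>v\<close> is \<open>1\<close> off the support of \<open>x\<close> and \<open>0\<close> on it.\<close>

lemma loc_minI_eventually:
  assumes "z \<in> S" and "eventually (\<lambda>y. y \<in> S \<longrightarrow> f z \<le> f y) (nhds z)"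
  shows "loc_min f S z"
  using assms unfolding loc_min_def eventually_nhds_metric by blast

lemma eventually_nhds_support_mono:
  fixes x :: "real^'n"
  shows "eventually (\<lambda>y. \<forall>i. x $ i \<noteq> 0 \<longrightarrow> y $ i \<noteq> 0) (nhds x)"
proof (rule eventually_all_finite)
  fix i
  have "((\<lambda>y. y $ i) \<longlongrightarrow> x $ i) (nhds x)"
    by (intro tendsto_vec_nth filterlim_ident)
  then show "eventually (\<lambda>y. x $ i \<noteq> 0 \<longrightarrow> y $ i \<noteq> 0) (nhds x)"
    by (cases "x $ i = 0") (auto dest: tendsto_imp_eventually_ne)
qed

lemma loc_min_l0norm:
  assumes "x \<in> S"
  shows "loc_min (\<lambda>y. real (l0norm y)) S x"
proof (rule loc_minI_eventually[OF assms])
  show "eventually (\<lambda>y. y \<in> S \<longrightarrow> real (l0norm x) \<le> real (l0norm y)) (nhds x)"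
    using eventually_nhds_support_mono[of x]
    by eventually_elim (auto simp: l0norm_def intro!: card_mono)
qed

lemma norm_axis_real: "norm (axis i (t::real)) = \<bar>t\<bar>"
  by (simp add: norm_eq_sqrt_inner inner_axis_axis)

lemma ones_nth [simp]: "ones $ i = 1"
  by (simp add: ones_def)

lemma vsign_vabs_nth [simp]: "vsign (vabs x) $ i = (if x $ i = 0 then 0 else 1)"
  by (simp add: vsign_def vabs_def)

lemma objMPEC_eq_sum: "objMPEC z = (\<Sum>i\<in>UNIV. 1 - snd z $ i)"
  by (simp add: objMPEC_def inner_vec_def ones_def)

lemma inner_vabs_eq_0_iff:
  fixes v x :: "real^'n"
  assumes "\<forall>i. 0 \<le> v $ i"
  shows "v \<bullet> vabs x = 0 \<longleftrightarrow> (\<forall>i. x $ i \<noteq> 0 \<longrightarrow> v $ i = 0)"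
  using assms unfolding inner_vec_def vabs_def
  by (subst sum_nonneg_eq_0_iff) auto

lemma loc_min_objMPEC_complement:
  assumes "x \<in> feasP A b \<delta>"
  shows "loc_min objMPEC (feasMPEC A b \<delta>) (x, ones - vsign (vabs x))"
    (is "loc_min _ _ (x, ?w)")
proof (rule loc_minI_eventually)
  show "(x, ?w) \<in> feasMPEC A b \<delta>"
    using assms by (simp add: feasMPEC_def feasP_def inner_vabs_eq_0_iff)
  have "filterlim fst (nhds x) (nhds (x, ?w))"
    using tendsto_fst[OF filterlim_ident, of "(x, ?w)"] by simp
  with eventually_nhds_support_mono[of x]
  have "eventually (\<lambda>z. \<forall>i. x $ i \<noteq> 0 \<longrightarrow> fst z $ i \<noteq> 0) (nhds (x, ?w))"
    by (rule eventually_compose_filterlim)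
  then show "eventually (\<lambda>z. z \<in> feasMPEC A b \<delta> \<longrightarrow> objMPEC (x, ?w) \<le> objMPEC z)
      (nhds (x, ?w))"
  proof eventually_elim
    case (elim z)
    show ?case
    proof
      assume feas: "z \<in> feasMPEC A b \<delta>"
      obtain y v where z: "z = (y, v)" by (cases z)
      have v: "\<forall>i. 0 \<le> v $ i \<and> v $ i \<le> 1" "\<forall>i. y $ i \<noteq> 0 \<longrightarrow> v $ i = 0"
        using feas by (auto simp: z feasMPEC_def inner_vabs_eq_0_iff)
      have "1 - ?w $ i \<le> 1 - v $ i" for i
        using v elim by (cases "x $ i = 0") (auto simp: z)
      then show "objMPEC (x, ?w) \<le> objMPEC z"
        unfolding objMPEC_eq_sum z by (intro sum_mono) simp
    qed
  qed
qed

lemma loc_min_objMPEC_imp_complement: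
  assumes "loc_min objMPEC (feasMPEC A b \<delta>) (x, v)"
  shows "v = ones - vsign (vabs x)"
proof -
  obtain \<epsilon> where feas: "(x, v) \<in> feasMPEC A b \<delta>" and "\<epsilon> > 0"
    and min: "\<forall>z\<in>feasMPEC A b \<delta>. dist z (x, v) < \<epsilon> \<longrightarrow> objMPEC (x, v) \<le> objMPEC z"
    using assms unfolding loc_min_def by blast
  have v: "\<forall>i. 0 \<le> v $ i \<and> v $ i \<le> 1" "\<forall>i. x $ i \<noteq> 0 \<longrightarrow> v $ i = 0"
    using feas by (auto simp: feasMPEC_def inner_vabs_eq_0_iff)
  have "v $ i = 1" if "x $ i = 0" for i
  proof (rule ccontr)
    assume "v $ i \<noteq> 1"
    define t where "t = min (1 - v $ i) (\<epsilon> / 2)"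
    have t: "0 < t" "v $ i + t \<le> 1" "t < \<epsilon>"
      using v \<open>v $ i \<noteq> 1\<close> \<open>\<epsilon> > 0\<close> by (auto simp: t_def less_le)
    have "(x, v + axis i t) \<in> feasMPEC A b \<delta>"
      using feas v t \<open>x $ i = 0\<close>
      by (auto simp: feasMPEC_def inner_vabs_eq_0_iff axis_def)
    moreover have "dist (x, v + axis i t) (x, v) < \<epsilon>"
      using t by (simp add: dist_Pair_Pair dist_norm norm_axis_real)
    ultimately have "objMPEC (x, v) \<le> objMPEC (x, v + axis i t)"
      using min by blast
    moreover have "objMPEC (x, v + axis i t) = objMPEC (x, v) - t"
      by (simp add: objMPEC_def inner_diff_right inner_add_right inner_axis)
    ultimately show False
      using t by simp
  qed
  with v show ?thesis
    by (auto simp: vec_eq_iff)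
qed

theorem proposition2p1:
  fixes A :: "real^'n^'m" and b :: "real^'m" and \<delta> :: real
  assumes "\<delta> \<ge> 0"
    and "feasP A b \<delta> \<noteq> {}"
  shows "(\<forall>x v. loc_min objMPEC (feasMPEC A b \<delta>) (x, v) \<longrightarrow> v = ones - vsign (vabs x))
    \<and> (\<forall>x. loc_min (\<lambda>y. real (l0norm y)) (feasP A b \<delta>) x \<longleftrightarrow>
            loc_min objMPEC (feasMPEC A b \<delta>) (x, ones - vsign (vabs x)))"
proof (intro conjI allI impI iffI)
  fix x v
  assume "loc_min objMPEC (feasMPEC A b \<delta>) (x, v)"
  then show "v = ones - vsign (vabs x)"
    by (rule loc_min_objMPEC_imp_complement)
next
  fix x
  assume "loc_min (\<lambda>y. real (l0norm y)) (feasP A b \<delta>) x"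
  then have "x \<in> feasP A b \<delta>"
    by (simp add: loc_min_def)
  then show "loc_min objMPEC (feasMPEC A b \<delta>) (x, ones - vsign (vabs x))"
    by (rule loc_min_objMPEC_complement)
next
  fix x
  assume "loc_min objMPEC (feasMPEC A b \<delta>) (x, ones - vsign (vabs x))"
  then have "x \<in> feasP A b \<delta>"
    by (simp add: loc_min_def feasMPEC_def feasP_def)
  then show "loc_min (\<lambda>y. real (l0norm y)) (feasP A b \<delta>) x"
    by (rule loc_min_l0norm)
qed

end
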